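(* (a) Let $(x_n)_{n\in\mathbb{N}}$ be a sequence of finite binary trees with $\lim_{n\to\infty}|x_n|=\infty$ that converges in the subtree size topology, i.e. $\lim_{n\to\infty}t(x_n,u)$ exists for every $u\in\mathbb{V}$. Then there is a unique probability measure $\mu$ on $(\mathbb{V}_\infty,\mathcal{B}_\infty)$ such that $\lim_{n\to\infty}t(x_n,u)=\mu(B_u)$ for all $u\in\mathbb{V}$. (b) Let $\mu$ be any probability measure on $(\mathbb{V}_\infty,\mathcal{B}_\infty)$ and let $(X_n)_{n\in\mathbb{N}}$ have distribution $\mathrm{DST}(\mu)$. Then with probability one, $\lim_{n\to\infty}t(X_n,u)=\mu(B_u)$ for all $u\in\mathbb{V}$ (i.e. $X_n$ converges almost surely to $\mu$ in the subtree size topology).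
   Context: $\mathbb{V}=\bigsqcup_{k\ge0}\{0,1\}^k$ is the set of finite $0$-$1$ words (including the empty word $\emptyset$); for words $u=(u_1,\dots,u_k)$, $v=(v_1,\dots,v_l)$, $u+v=(u_1,\dots,u_k,v_1,\dots,v_l)$ denotes concatenation, and $u\prec v$ (prefix order) means $k<l$ and $u_i=v_i$ for $i\le k$. A binary tree is a subset $x\subseteq\mathbb{V}$ that is prefix-stable: $(v_1,\dots,v_k)\in x$ with $k>0$ implies $(v_1,\dots,v_{k-1})\in x$. A finite binary tree is one with finitely many elements (nodes); $|x|$ is its number of nodes. For a finite nonempty binary tree $x$ and $u\in\mathbb{V}$, the subtree size function is $t(x,u)=\frac{1}{|x|}\,|\{v\in\mathbb{V}: u+v\in x\}|$. $\mathbb{V}_\infty=\{0,1\}^{\mathbb{N}}$ with $\sigma$-field $\mathcal{B}_\infty$ generated by coordinate projections, and $B_u=\{v\in\mathbb{V}_\infty: u \text{ is a prefix of } v\}$. The digital search tree distribution $\mathrm{DST}(\mu)$: let $\xi_1,\xi_2,\dots$ be i.i.d. random elements of $\mathbb{V}_\infty$ with distribution $\mu$; set $X_1=\{\emptyset\}$ and, given $X_n$, let $X_{n+1}=X_n\cup\{w\}$ where $w$ is the shortest finite prefix of $\xi_n$ that is not in $X_n$ (i.e. $\xi_n$ is read as a routing instruction, $0$ = go left, $1$ = go right, starting from the root, and the node where the path first exits $X_n$ is added). $\mathrm{DST}(\mu)$ is the distribution of the resulting sequence $(X_n)_{n\in\mathbb{N}}$, where $|X_n|=n$. *)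

theory Defs
  imports "HOL-Probability.Probability"
begin

text \<open>Finite 0-1 words are modelled as \<open>bool list\<close> (False = 0, True = 1);
  concatenation is \<open>@\<close>.  Infinite words are \<open>nat \<Rightarrow> bool\<close>.\<close>

definition binary_tree :: "bool list set \<Rightarrow> bool" where
  "binary_tree x \<longleftrightarrow> (\<forall>v \<in> x. v \<noteq> [] \<longrightarrow> butlast v \<in> x)"

definition subtree_size :: "bool list set \<Rightarrow> bool list \<Rightarrow> real" where
  "subtree_size x u = real (card {v. u @ v \<in> x}) / real (card x)"

definition Vinf :: "(nat \<Rightarrow> bool) measure" where
  "Vinf = Pi\<^sub>M UNIV (\<lambda>_. count_space UNIV)"

definition cyl :: "bool list \<Rightarrow> (nat \<Rightarrow> bool) set" where
  "cyl u = {\<omega>. \<forall>i < length u. \<omega> i = u ! i}"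

definition pref :: "(nat \<Rightarrow> bool) \<Rightarrow> nat \<Rightarrow> bool list" where
  "pref \<omega> m = map \<omega> [0..<m]"

definition exit_node :: "bool list set \<Rightarrow> (nat \<Rightarrow> bool) \<Rightarrow> bool list" where
  "exit_node X \<omega> = pref \<omega> (LEAST m. pref \<omega> m \<notin> X)"

text \<open>\<open>dst \<xi> k\<close> is \<open>X\<^sub>k\<^sub>+\<^sub>1\<close> of the paper (index shifted by one, \<open>\<xi>\<close> indexed from 0).\<close>
fun dst :: "(nat \<Rightarrow> nat \<Rightarrow> bool) \<Rightarrow> nat \<Rightarrow> bool list set" where
  "dst \<xi> 0 = {[]}"
| "dst \<xi> (Suc k) = insert (exit_node (dst \<xi> k) (\<xi> k)) (dst \<xi> k)"

end

theory Submission
  imports Defs "HOL-Library.Sublist"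
begin

text \<open>
  (a) Subtree sizes split as \<open>t(x,u) = [u \<in> x]/|x| + t(x,u0) + t(x,u1)\<close>. Since \<open>|x\<^sub>n| \<rightarrow> \<infinity>\<close>,
  the limits \<open>\<phi>(u)\<close> are nonnegative weights with \<open>\<phi>(\<emptyset>) = 1\<close> and \<open>\<phi>(u) = \<phi>(u0) + \<phi>(u1)\<close>.
  Any such family is realised by a measure: decode a uniform \<open>U \<in> [0,1)\<close> into an infinite word
  by successively splitting the current interval in the proportion \<open>\<phi>(u0) : \<phi>(u1)\<close>; then \<open>U\<close>
  falls into \<open>B\<^sub>u\<close> iff it lies in an interval of length \<open>\<phi>(u)\<close>. The cylinders form an
  \<open>\<inter>\<close>-stable generator, which gives uniqueness.

  (b) A node below \<open>u\<close> is added at step \<open>k\<close> only if \<open>\<xi>\<^sub>k \<in> B\<^sub>u\<close>. Conversely, if \<open>\<xi>\<^sub>k \<in> B\<^sub>u\<close>,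
  the added node lies below \<open>u\<close> unless it is one of the \<open>|u|\<close> proper prefixes of \<open>u\<close>, and no
  node is added twice. Hence the subtree size of \<open>X\<^sub>n\<close> at \<open>u\<close> differs from the number of
  \<open>k < n\<close> with \<open>\<xi>\<^sub>k \<in> B\<^sub>u\<close> by at most \<open>|u| + 1\<close>, and the strong law of large numbers,
  obtained from Hoeffding's inequality and Borel-Cantelli, applies to each of the countably
  many \<open>u\<close>.
\<close>

section \<open>Prefixes and cylinders\<close>

lemma length_pref [simp]: "length (pref \<omega> m) = m"
  by (simp add: pref_def)

lemma take_pref: "m \<le> n \<Longrightarrow> take m (pref \<omega> n) = pref \<omega> m"
  by (simp add: pref_def take_map)

lemma mem_cyl_iff_pref: "\<omega> \<in> cyl u \<longleftrightarrow> pref \<omega> (length u) = u"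
proof
  assume "\<omega> \<in> cyl u"
  then show "pref \<omega> (length u) = u"
    by (intro nth_equalityI) (auto simp: cyl_def pref_def)
next
  assume h: "pref \<omega> (length u) = u"
  show "\<omega> \<in> cyl u"
    unfolding cyl_def
  proof (intro CollectI allI impI)
    fix i assume "i < length u"
    then show "\<omega> i = u ! i"
      using arg_cong[OF h, of "\<lambda>l. l ! i"] by (simp add: pref_def)
  qed
qed

lemma prefix_pref_iff: "prefix u (pref \<omega> m) \<longleftrightarrow> length u \<le> m \<and> \<omega> \<in> cyl u"
proof
  assume "prefix u (pref \<omega> m)"
  then obtain w where w: "pref \<omega> m = u @ w" by (auto simp: prefix_def)
  have len: "length u \<le> m"
    using arg_cong[OF w, of length] by simp
  moreover have "pref \<omega> (length u) = u"
    using take_pref[OF len, of \<omega>] w by simp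
  ultimately show "length u \<le> m \<and> \<omega> \<in> cyl u" by (simp add: mem_cyl_iff_pref)
next
  assume "length u \<le> m \<and> \<omega> \<in> cyl u"
  then have "take (length u) (pref \<omega> m) = u"
    by (simp add: take_pref mem_cyl_iff_pref)
  then show "prefix u (pref \<omega> m)"
    using take_is_prefix by metis
qed

lemma cyl_Nil [simp]: "cyl [] = UNIV"
  by (simp add: cyl_def)

lemma cyl_antimono: "prefix u v \<Longrightarrow> cyl v \<subseteq> cyl u"
  by (auto simp: cyl_def prefix_def nth_append)

lemma cyl_Int_cyl:
  "cyl u \<inter> cyl v = (if prefix u v then cyl v else if prefix v u then cyl u else {})"
proof -
  have "prefix u v \<or> prefix v u" if "\<omega> \<in> cyl u" "\<omega> \<in> cyl v" for \<omega>
  proof (rule prefix_same_cases)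
    show "prefix u (pref \<omega> (length u + length v))" "prefix v (pref \<omega> (length u + length v))"
      using that by (simp_all add: prefix_pref_iff)
  qed
  then show ?thesis using cyl_antimono by auto
qed

lemma space_Vinf [simp]: "space Vinf = UNIV"
  by (simp add: Vinf_def space_PiM)

lemma cyl_in_sets_Vinf [measurable]: "cyl u \<in> sets Vinf"
proof -
  have "cyl u = {\<omega> \<in> space Vinf. \<forall>i \<in> {..<length u}. \<omega> i = u ! i}"
    by (auto simp: cyl_def)
  also have "\<dots> \<in> sets Vinf"
    unfolding Vinf_def by measurable
  finally show ?thesis .
qed

lemma sets_Vinf_eq_sigma_cyl: "sets Vinf = sigma_sets UNIV (insert {} (range cyl))"
proof
  have "insert {} (range cyl) \<subseteq> sets Vinf"
    using cyl_in_sets_Vinf by auto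
  then show "sigma_sets UNIV (insert {} (range cyl)) \<subseteq> sets Vinf"
    using sets.sigma_sets_subset[of "insert {} (range cyl)" Vinf] by simp
next
  interpret S: sigma_algebra UNIV "sigma_sets UNIV (insert {} (range cyl))"
    by (rule sigma_algebra_sigma_sets) auto
  have "sets Vinf =
      sigma_sets UNIV {{\<omega> \<in> UNIV. \<omega> i \<in> A} | i A. i \<in> UNIV \<and> A \<in> sets (count_space UNIV)}"
    unfolding Vinf_def sets_PiM_single by simp
  also have "\<dots> \<subseteq> sigma_sets UNIV (insert {} (range cyl))"
  proof (rule S.sigma_sets_subset, safe)
    fix i :: nat and A :: "bool set"
    have "{\<omega> \<in> UNIV. \<omega> i \<in> A} = (\<Union>w \<in> {w. length w = Suc i \<and> w ! i \<in> A}. cyl w)"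
    proof safe
      fix \<omega> :: "nat \<Rightarrow> bool" assume "\<omega> i \<in> A"
      then show "\<omega> \<in> (\<Union>w \<in> {w. length w = Suc i \<and> w ! i \<in> A}. cyl w)"
        by (intro UN_I[of "pref \<omega> (Suc i)"]) (auto simp: mem_cyl_iff_pref pref_def nth_append)
    qed (auto simp: cyl_def)
    also have "\<dots> \<in> sigma_sets UNIV (insert {} (range cyl))"
      by (rule S.countable_UN'') auto
    finally show "{\<omega> \<in> UNIV. \<omega> i \<in> A} \<in> sigma_sets UNIV (insert {} (range cyl))" .
  qed
  finally show "sets Vinf \<subseteq> sigma_sets UNIV (insert {} (range cyl))" .
qed

lemma measure_eqI_cyl:
  assumes "prob_space \<nu>" "prob_space \<nu>'" "sets \<nu> = sets Vinf" "sets \<nu>' = sets Vinf"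
    and eq: "\<And>u. measure \<nu> (cyl u) = measure \<nu>' (cyl u)"
  shows "\<nu> = \<nu>'"
proof (rule measure_eqI_generator_eq
    [where E = "insert {} (range cyl)" and \<Omega> = UNIV and A = "\<lambda>_. UNIV"])
  interpret \<nu>: prob_space \<nu> by fact
  interpret \<nu>': prob_space \<nu>' by fact
  show "Int_stable (insert {} (range cyl))"
    by (auto simp: Int_stable_def cyl_Int_cyl)
  show "emeasure \<nu> X = emeasure \<nu>' X" if "X \<in> insert {} (range cyl)" for X
    using that eq by (auto simp: \<nu>.emeasure_eq_measure \<nu>'.emeasure_eq_measure)
  show "emeasure \<nu> UNIV \<noteq> \<infinity>" for i :: nat
    by (simp add: \<nu>.emeasure_eq_measure)
  show "range (\<lambda>_. UNIV) \<subseteq> insert {} (range cyl)"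
    using cyl_Nil by blast
qed (use assms(3,4) sets_Vinf_eq_sigma_cyl in auto)

section \<open>Measures with prescribed cylinder weights\<close>

text \<open>
  \<open>left_mass \<phi> u\<close> is the weight of the words of length \<open>|u|\<close> lexicographically below \<open>u\<close>.
  A number \<open>U \<in> [0,1)\<close> is decoded by bisection: at node \<open>w\<close> go right iff \<open>U\<close> lies beyond the
  interval of \<open>w @ [False]\<close>.
\<close>

definition left_mass :: "(bool list \<Rightarrow> real) \<Rightarrow> bool list \<Rightarrow> real" where
  "left_mass \<phi> u = (\<Sum>i<length u. if u ! i then \<phi> (take i u @ [False]) else 0)"

fun bisect_path :: "(bool list \<Rightarrow> real) \<Rightarrow> real \<Rightarrow> nat \<Rightarrow> bool list" where
  "bisect_path \<phi> U 0 = []"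
| "bisect_path \<phi> U (Suc n) =
     bisect_path \<phi> U n @ [left_mass \<phi> (bisect_path \<phi> U n) + \<phi> (bisect_path \<phi> U n @ [False]) \<le> U]"

definition bisect_word :: "(bool list \<Rightarrow> real) \<Rightarrow> real \<Rightarrow> nat \<Rightarrow> bool" where
  "bisect_word \<phi> U i = bisect_path \<phi> U (Suc i) ! i"

lemma left_mass_Nil [simp]: "left_mass \<phi> [] = 0"
  by (simp add: left_mass_def)

lemma left_mass_snoc: "left_mass \<phi> (u @ [b]) = left_mass \<phi> u + (if b then \<phi> (u @ [False]) else 0)"
proof -
  have "(\<Sum>i<length u. if (u @ [b]) ! i then \<phi> (take i (u @ [b]) @ [False]) else 0) = left_mass \<phi> u"
    unfolding left_mass_def by (intro sum.cong) (auto simp: nth_append)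
  then show ?thesis
    by (simp add: left_mass_def)
qed

lemma length_bisect_path [simp]: "length (bisect_path \<phi> U n) = n"
  by (induction n) auto

lemma take_bisect_path: "m \<le> n \<Longrightarrow> take m (bisect_path \<phi> U n) = bisect_path \<phi> U m"
  by (induction n) (auto simp: le_Suc_eq)

lemma pref_bisect_word: "pref (bisect_word \<phi> U) n = bisect_path \<phi> U n"
proof (rule nth_equalityI)
  fix i assume "i < length (pref (bisect_word \<phi> U) n)"
  then have i: "i < n"
    by simp
  have "bisect_path \<phi> U (Suc i) ! i = take (Suc i) (bisect_path \<phi> U n) ! i"
    using i by (subst take_bisect_path) auto
  then show "pref (bisect_word \<phi> U) n ! i = bisect_path \<phi> U n ! i"
    using i by (simp add: pref_def bisect_word_def)
qed simp

lemma measurable_bisect_path: "(\<lambda>U. bisect_path \<phi> U n) \<in> borel \<rightarrow>\<^sub>M count_space UNIV"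
proof (induction n)
  case (Suc n)
  have "(\<lambda>U. (\<lambda>w. w @ [left_mass \<phi> w + \<phi> (w @ [False]) \<le> U]) (bisect_path \<phi> U n))
          \<in> borel \<rightarrow>\<^sub>M count_space UNIV"
  proof (rule measurable_compose_countable[OF _ Suc])
    fix w :: "bool list"
    have "(\<lambda>U::real. left_mass \<phi> w + \<phi> (w @ [False]) \<le> U) \<in> borel \<rightarrow>\<^sub>M count_space UNIV"
      by measurable
    then show "(\<lambda>U. w @ [left_mass \<phi> w + \<phi> (w @ [False]) \<le> U]) \<in> borel \<rightarrow>\<^sub>M count_space UNIV"
      by (rule measurable_compose[where g = "\<lambda>b. w @ [b]"]) simp
  qed
  then show ?case
    by simp
qed simp

lemma measurable_bisect_word: "bisect_word \<phi> \<in> borel \<rightarrow>\<^sub>M Vinf"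
  unfolding Vinf_def bisect_word_def
proof (rule measurable_PiM_single')
  show "(\<lambda>U. bisect_path \<phi> U (Suc i) ! i) \<in> borel \<rightarrow>\<^sub>M count_space UNIV" for i
    by (rule measurable_compose[OF measurable_bisect_path]) simp
qed simp

locale cyl_weights =
  fixes \<phi> :: "bool list \<Rightarrow> real"
  assumes weight_Nil: "\<phi> [] = 1"
    and weight_nonneg: "\<phi> u \<ge> 0"
    and weight_split: "\<phi> u = \<phi> (u @ [False]) + \<phi> (u @ [True])"
begin

lemma left_mass_bounds: "0 \<le> left_mass \<phi> u \<and> left_mass \<phi> u + \<phi> u \<le> 1"
proof (induction u rule: rev_induct)
  case (snoc b u)
  then show ?case
    using weight_split[of u] weight_nonneg[of "u @ [False]"] weight_nonneg[of "u @ [True]"]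
    by (cases b) (auto simp: left_mass_snoc)
qed (simp add: weight_Nil)

lemma bisect_path_eq_iff:
  assumes "length u = n" "0 \<le> U" "U < 1"
  shows "bisect_path \<phi> U n = u \<longleftrightarrow> left_mass \<phi> u \<le> U \<and> U < left_mass \<phi> u + \<phi> u"
  using assms(1)
proof (induction n arbitrary: u)
  case 0
  then show ?case
    using assms(2,3) by (simp add: weight_Nil)
next
  case (Suc n)
  then obtain w b where u: "u = w @ [b]" and w: "length w = n"
    by (metis length_Suc_conv_rev)
  have "bisect_path \<phi> U (Suc n) = u \<longleftrightarrow>
          bisect_path \<phi> U n = w \<and> b = (left_mass \<phi> w + \<phi> (w @ [False]) \<le> U)"
    using w u by auto
  also have "\<dots> \<longleftrightarrow> (left_mass \<phi> w \<le> U \<and> U < left_mass \<phi> w + \<phi> w) \<and>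
                      b = (left_mass \<phi> w + \<phi> (w @ [False]) \<le> U)"
    using Suc.IH[OF w] by simp
  also have "\<dots> \<longleftrightarrow> left_mass \<phi> u \<le> U \<and> U < left_mass \<phi> u + \<phi> u"
    using weight_split[of w] weight_nonneg[of "w @ [False]"] weight_nonneg[of "w @ [True]"]
    by (cases b) (auto simp: u left_mass_snoc)
  finally show ?case .
qed

lemma bisect_word_vimage_cyl:
  "{0..<1} \<inter> bisect_word \<phi> -` cyl u = {left_mass \<phi> u..<left_mass \<phi> u + \<phi> u}"
proof (intro set_eqI)
  fix U
  show "U \<in> {0..<1} \<inter> bisect_word \<phi> -` cyl u \<longleftrightarrow> U \<in> {left_mass \<phi> u..<left_mass \<phi> u + \<phi> u}"
  proof (cases "0 \<le> U \<and> U < 1")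
    case True
    then show ?thesis
      using bisect_path_eq_iff[of u "length u" U] by (simp add: mem_cyl_iff_pref pref_bisect_word)
  next
    case False
    then show ?thesis
      using left_mass_bounds[of u] by auto
  qed
qed

lemma ex_prob_space_measure_cyl:
  "\<exists>\<nu>. prob_space \<nu> \<and> sets \<nu> = sets Vinf \<and> (\<forall>u. measure \<nu> (cyl u) = \<phi> u)"
proof -
  define Unif where "Unif = uniform_measure lborel {0..<1::real}"
  have "prob_space Unif"
    unfolding Unif_def by (rule prob_space_uniform_measure) simp_all
  moreover have meas: "bisect_word \<phi> \<in> Unif \<rightarrow>\<^sub>M Vinf"
    using measurable_bisect_word by (simp add: Unif_def cong: measurable_cong_sets)
  moreover have "measure (distr Unif Vinf (bisect_word \<phi>)) (cyl u) = \<phi> u" for u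
  proof -
    have "measure (distr Unif Vinf (bisect_word \<phi>)) (cyl u) = measure Unif (bisect_word \<phi> -` cyl u)"
      using measure_distr[OF meas cyl_in_sets_Vinf] by (simp add: Unif_def)
    also have "\<dots> = measure lborel ({0..<1} \<inter> bisect_word \<phi> -` cyl u)"
      unfolding Unif_def
      using measurable_sets_borel[OF measurable_bisect_word cyl_in_sets_Vinf]
      by (subst measure_uniform_measure) auto
    also have "\<dots> = \<phi> u"
      using weight_nonneg[of u] by (simp add: bisect_word_vimage_cyl)
    finally show ?thesis .
  qed
  ultimately show ?thesis
    by (intro exI[of _ "distr Unif Vinf (bisect_word \<phi>)"]) (simp add: prob_space.prob_space_distr)
qed

end

section \<open>Limits of subtree sizes\<close>

lemma finite_subtree: "finite x \<Longrightarrow> finite {v. u @ v \<in> x}"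
  using finite_vimageI[of x "(@) u"] by (simp add: vimage_def inj_def)

lemma card_subtree_split:
  assumes "finite x"
  shows "card {v. u @ v \<in> x} =
           of_bool (u \<in> x) + card {v. (u @ [False]) @ v \<in> x} + card {v. (u @ [True]) @ v \<in> x}"
proof -
  define S where "S b = {v. (u @ [b]) @ v \<in> x}" for b
  define R :: "bool list set" where "R = (if u \<in> x then {[]} else {})"
  have fin: "finite (S b)" for b
    unfolding S_def by (rule finite_subtree[OF assms])
  have split: "{v. u @ v \<in> x} = R \<union> (Cons False ` S False \<union> Cons True ` S True)"
  proof (intro set_eqI iffI)
    fix v assume "v \<in> {v. u @ v \<in> x}"
    then show "v \<in> R \<union> (Cons False ` S False \<union> Cons True ` S True)"
    proof (cases v)
      case (Cons b w)
      then show ?thesis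
        using \<open>v \<in> {v. u @ v \<in> x}\<close> by (cases b) (auto simp: S_def)
    qed (auto simp: R_def)
  qed (auto simp: S_def R_def split: if_splits)
  have "card (Cons b ` S b) = card (S b)" for b
    by (rule card_image) simp
  moreover have "card (Cons False ` S False \<union> Cons True ` S True) =
      card (Cons False ` S False) + card (Cons True ` S True)"
    by (rule card_Un_disjoint) (use fin in auto)
  moreover have "card {v. u @ v \<in> x} = card R + card (Cons False ` S False \<union> Cons True ` S True)"
    unfolding split by (rule card_Un_disjoint) (use fin in \<open>auto simp: R_def\<close>)
  ultimately show ?thesis
    by (simp add: S_def R_def)
qed

lemma card_subtree_insert:
  assumes "finite X" "e \<notin> X"
  shows "card {v. u @ v \<in> insert e X} = of_bool (prefix u e) + card {v. u @ v \<in> X}"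
proof (cases "prefix u e")
  case True
  then obtain w where w: "e = u @ w"
    by (auto simp: prefix_def)
  then have "{v. u @ v \<in> insert e X} = insert w {v. u @ v \<in> X}"
    by auto
  moreover have "w \<notin> {v. u @ v \<in> X}"
    using w assms(2) by simp
  ultimately show ?thesis
    using True finite_subtree[OF assms(1)] by simp
next
  case False
  then have "{v. u @ v \<in> insert e X} = {v. u @ v \<in> X}"
    by (auto simp: prefix_def)
  then show ?thesis
    using False by simp
qed

lemma subtree_size_split:
  assumes "finite x"
  shows "subtree_size x u =
           of_bool (u \<in> x) / card x + subtree_size x (u @ [False]) + subtree_size x (u @ [True])"
  unfolding subtree_size_def card_subtree_split[OF assms, of u] by (simp add: add_divide_distrib)

lemma cyl_weights_subtree_size_limit:
  assumes "\<And>n. finite (x n)" "\<And>n. x n \<noteq> {}"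
    and card: "filterlim (\<lambda>n. card (x n)) at_top sequentially"
    and lim: "\<And>u. (\<lambda>n. subtree_size (x n) u) \<longlonglongrightarrow> \<phi> u"
  shows "cyl_weights \<phi>"
proof
  have "subtree_size (x n) [] = 1" for n
    using assms(1,2) by (simp add: subtree_size_def)
  then show "\<phi> [] = 1"
    using LIMSEQ_unique[OF lim[of "[]"]] by simp
next
  show "0 \<le> \<phi> u" for u
    using lim[of u] by (rule LIMSEQ_le_const) (simp add: subtree_size_def)
next
  fix u
  have "(\<lambda>n. 1 / real (card (x n))) \<longlonglongrightarrow> 0"
    using filterlim_compose[OF lim_const_over_n[of 1] card] by simp
  then have "(\<lambda>n. of_bool (u \<in> x n) / real (card (x n))) \<longlonglongrightarrow> 0"
    by (rule Lim_null_comparison[rotated]) (simp add: divide_right_mono)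
  then have "(\<lambda>n. subtree_size (x n) u) \<longlonglongrightarrow> 0 + \<phi> (u @ [False]) + \<phi> (u @ [True])"
    unfolding subtree_size_split[OF assms(1), where u = u] by (intro tendsto_add lim)
  then show "\<phi> u = \<phi> (u @ [False]) + \<phi> (u @ [True])"
    using LIMSEQ_unique[OF lim[of u]] by simp
qed

lemma ex1_measure_subtree_size_limit:
  assumes "\<And>n. finite (x n)" "\<And>n. x n \<noteq> {}"
    and "filterlim (\<lambda>n. card (x n)) at_top sequentially"
    and "\<And>u. convergent (\<lambda>n. subtree_size (x n) u)"
  shows "\<exists>!\<mu>. prob_space \<mu> \<and> sets \<mu> = sets Vinf \<and>
               (\<forall>u. (\<lambda>n. subtree_size (x n) u) \<longlonglongrightarrow> measure \<mu> (cyl u))"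
proof -
  define \<phi> where "\<phi> u = lim (\<lambda>n. subtree_size (x n) u)" for u
  have lim: "(\<lambda>n. subtree_size (x n) u) \<longlonglongrightarrow> \<phi> u" for u
    using assms(4) unfolding \<phi>_def by (simp add: convergent_LIMSEQ_iff)
  interpret cyl_weights \<phi>
    using assms(1-3) lim by (rule cyl_weights_subtree_size_limit)
  obtain \<nu> where \<nu>: "prob_space \<nu>" "sets \<nu> = sets Vinf" "\<And>u. measure \<nu> (cyl u) = \<phi> u"
    using ex_prob_space_measure_cyl by blast
  show ?thesis
  proof (rule ex1I[of _ \<nu>])
    fix \<mu> assume \<mu>: "prob_space \<mu> \<and> sets \<mu> = sets Vinf \<and>
                    (\<forall>u. (\<lambda>n. subtree_size (x n) u) \<longlonglongrightarrow> measure \<mu> (cyl u))"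
    then have "measure \<mu> (cyl u) = \<phi> u" for u
      using LIMSEQ_unique[OF _ lim[of u]] by blast
    then show "\<mu> = \<nu>"
      using \<mu> \<nu> by (intro measure_eqI_cyl) auto
  qed (use \<nu> lim in simp)
qed

section \<open>A strong law of large numbers for bounded i.i.d. variables\<close>

lemma LIMSEQ_if_eventually_close:
  fixes f :: "nat \<Rightarrow> real"
  assumes close: "\<And>m. eventually (\<lambda>n. \<bar>f n - l\<bar> < 1 / Suc m) sequentially"
  shows "f \<longlonglongrightarrow> l"
  unfolding tendsto_iff dist_real_def
proof (intro allI impI)
  fix r :: real assume "r > 0"
  then obtain m :: nat where "1 / Suc m < r"
    by (metis nat_approx_posE)
  with close[of m] show "eventually (\<lambda>n. \<bar>f n - l\<bar> < r) sequentially"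
    by (auto elim: eventually_mono)
qed

lemma (in prob_space) prob_average_deviation_le:
  fixes Z :: "nat \<Rightarrow> 'a \<Rightarrow> real"
  assumes indep: "indep_vars (\<lambda>_. borel) Z UNIV"
    and distr_Z: "\<And>i. distr M borel (Z i) = distr M borel (Z 0)"
    and bounded: "AE x in M. Z 0 x \<in> {a..b}" and "a < b" and "e > 0"
  shows "prob {x \<in> space M. e \<le> \<bar>(\<Sum>i<n. Z i x) / n - expectation (Z 0)\<bar>}
           \<le> 2 * exp (-2 * e\<^sup>2 / (b - a)\<^sup>2) ^ n"
proof (cases "n = 0")
  case True
  then show ?thesis
    by (simp add: order_trans[OF prob_le_1])
next
  case False
  then have "{..<n} \<noteq> {}"
    by (simp add: lessThan_empty_iff)
  interpret Hoeffding_ineq_iid M "{..<n}" Z "Z 0" a b "expectation (Z 0)"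
  proof unfold_locales
    show "indep_vars (\<lambda>_. borel) Z {..<n}"
      by (rule indep_vars_subset[OF indep]) simp
    show "distr M borel (Z i) = distr M borel (Z 0)" for i
      by (rule distr_Z)
    show "random_variable borel (Z 0)"
      using indep unfolding indep_vars_def by blast
    show "AE x in M. Z 0 x \<in> {a..b}"
      by (rule bounded)
  qed simp
  have "prob {x \<in> space M. e \<le> \<bar>(\<Sum>i<n. Z i x) / n - expectation (Z 0)\<bar>}
          \<le> 2 * exp (-2 * real n * e\<^sup>2 / (b - a)\<^sup>2)"
    using Hoeffding_ineq_abs_ge'[OF less_imp_le[OF \<open>e > 0\<close>] \<open>a < b\<close> \<open>{..<n} \<noteq> {}\<close>]
    unfolding card_lessThan by blast
  also have "exp (-2 * real n * e\<^sup>2 / (b - a)\<^sup>2) = exp (-2 * e\<^sup>2 / (b - a)\<^sup>2) ^ n"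
    by (simp add: exp_of_nat_mult[symmetric] mult_ac)
  finally show ?thesis .
qed

lemma (in prob_space) AE_LIMSEQ_average_iid_bounded:
  fixes Z :: "nat \<Rightarrow> 'a \<Rightarrow> real"
  assumes indep: "indep_vars (\<lambda>_. borel) Z UNIV"
    and distr_Z: "\<And>i. distr M borel (Z i) = distr M borel (Z 0)"
    and bounded: "AE x in M. Z 0 x \<in> {a..b}" and "a < b"
  shows "AE x in M. (\<lambda>n. (\<Sum>i<n. Z i x) / n) \<longlonglongrightarrow> expectation (Z 0)"
proof -
  have [measurable]: "random_variable borel (Z i)" for i
    using indep unfolding indep_vars_def by blast
  define A where "A e n = {x \<in> space M. e \<le> \<bar>(\<Sum>i<n. Z i x) / n - expectation (Z 0)\<bar>}"
    for e :: real and n :: nat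
  have "AE x in M. eventually (\<lambda>n. x \<in> space M - A e n) sequentially" if "e > 0" for e
  proof (rule borel_cantelli_AE1)
    show "A e n \<in> sets M" for n
      unfolding A_def by measurable
    have "summable (\<lambda>n. 2 * exp (-2 * e\<^sup>2 / (b - a)\<^sup>2) ^ n)"
      using that \<open>a < b\<close> by (intro summable_mult summable_geometric) auto
    then show "summable (\<lambda>n. measure M (A e n))"
      by (rule summable_comparison_test'[where N = 0])
        (use prob_average_deviation_le[OF assms that] in \<open>auto simp: A_def\<close>)
  qed (simp add: emeasure_eq_measure)
  then have "AE x in M. \<forall>m::nat. eventually (\<lambda>n. x \<in> space M - A (1 / Suc m) n) sequentially"
    unfolding AE_all_countable by simp
  then show ?thesis
  proof (rule eventually_mono)
    fix x assume x: "\<forall>m::nat. eventually (\<lambda>n. x \<in> space M - A (1 / Suc m) n) sequentially"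
    show "(\<lambda>n. (\<Sum>i<n. Z i x) / n) \<longlonglongrightarrow> expectation (Z 0)"
    proof (rule LIMSEQ_if_eventually_close)
      fix m :: nat
      show "eventually (\<lambda>n. \<bar>(\<Sum>i<n. Z i x) / n - expectation (Z 0)\<bar> < 1 / Suc m) sequentially"
        using x[rule_format, of m] by (rule eventually_mono) (auto simp: A_def)
    qed
  qed
qed

section \<open>Digital search trees\<close>

lemma ex_pref_notin: "finite X \<Longrightarrow> \<exists>m. pref \<omega> m \<notin> X"
proof (rule ccontr)
  assume "finite X" "\<nexists>m. pref \<omega> m \<notin> X"
  moreover have "inj (pref \<omega>)"
    by (rule injI) (metis length_pref)
  ultimately show False
    using finite_subset[of "range (pref \<omega>)" X] finite_imageD[of "pref \<omega>" UNIV] by auto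
qed

lemma exit_node_notin: "finite X \<Longrightarrow> exit_node X \<omega> \<notin> X"
  unfolding exit_node_def using ex_pref_notin by (rule LeastI_ex)

lemma exit_node_eq_pref: "\<exists>m. exit_node X \<omega> = pref \<omega> m"
  unfolding exit_node_def by blast

definition dst_node :: "(nat \<Rightarrow> nat \<Rightarrow> bool) \<Rightarrow> nat \<Rightarrow> bool list" where
  "dst_node \<xi> k = exit_node (dst \<xi> k) (\<xi> k)"

lemma dst_Suc_eq_insert [simp]: "dst \<xi> (Suc k) = insert (dst_node \<xi> k) (dst \<xi> k)"
  by (simp add: dst_node_def)

declare dst.simps(2) [simp del]

lemma finite_dst [simp]: "finite (dst \<xi> n)"
  by (induction n) auto

lemma dst_node_notin: "dst_node \<xi> k \<notin> dst \<xi> k"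
  by (simp add: dst_node_def exit_node_notin)

lemma card_dst: "card (dst \<xi> n) = Suc n"
  by (induction n) (simp_all add: dst_node_notin)

lemma dst_mono: "m \<le> n \<Longrightarrow> dst \<xi> m \<subseteq> dst \<xi> n"
  by (induction n) (auto simp: le_Suc_eq)

lemma inj_dst_node: "inj (dst_node \<xi>)"
proof -
  have "dst_node \<xi> i \<noteq> dst_node \<xi> j" if "i < j" for i j
  proof -
    have "dst_node \<xi> i \<in> dst \<xi> j"
      using dst_mono[of "Suc i" j \<xi>] that by auto
    then show ?thesis
      using dst_node_notin[of \<xi> j] by auto
  qed
  then show ?thesis
    by (metis injI linorder_neqE_nat)
qed

lemma card_subtree_dst:
  "card {v. u @ v \<in> dst \<xi> n} = of_bool (u = []) + card {k. k < n \<and> prefix u (dst_node \<xi> k)}"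
proof (induction n)
  case 0
  have "{v. u @ v \<in> dst \<xi> 0} = (if u = [] then {[]} else {})"
    by auto
  then show ?case
    by simp
next
  case (Suc n)
  have "card {v. u @ v \<in> dst \<xi> (Suc n)} =
          of_bool (prefix u (dst_node \<xi> n)) + card {v. u @ v \<in> dst \<xi> n}"
    using card_subtree_insert[OF finite_dst dst_node_notin] by simp
  moreover have "{k. k < Suc n \<and> prefix u (dst_node \<xi> k)} =
      (if prefix u (dst_node \<xi> n) then {n} else {}) \<union> {k. k < n \<and> prefix u (dst_node \<xi> k)}"
    by (auto simp: less_Suc_eq)
  ultimately show ?case
    using Suc by simp
qed

lemma card_prefix_dst_node_le_card_cyl:
  "card {k. k < n \<and> prefix u (dst_node \<xi> k)} \<le> card {k. k < n \<and> \<xi> k \<in> cyl u}"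
proof (rule card_mono)
  show "{k. k < n \<and> prefix u (dst_node \<xi> k)} \<subseteq> {k. k < n \<and> \<xi> k \<in> cyl u}"
  proof safe
    fix k assume "prefix u (dst_node \<xi> k)"
    moreover obtain m where "dst_node \<xi> k = pref (\<xi> k) m"
      using exit_node_eq_pref by (auto simp: dst_node_def)
    ultimately show "\<xi> k \<in> cyl u"
      by (simp add: prefix_pref_iff)
  qed
qed simp

lemma card_cyl_le_card_prefix_dst_node:
  "card {k. k < n \<and> \<xi> k \<in> cyl u} \<le> card {k. k < n \<and> prefix u (dst_node \<xi> k)} + length u"
proof -
  define T where "T = {k. k < n \<and> dst_node \<xi> k \<in> (\<lambda>m. take m u) ` {..<length u}}"
  \<comment> \<open>If \<open>\<xi> k \<in> cyl u\<close>, the node added at step \<open>k\<close> is either below \<open>u\<close> or a proper prefix of \<open>u\<close>.\<close>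
  have "{k. k < n \<and> \<xi> k \<in> cyl u} \<subseteq> {k. k < n \<and> prefix u (dst_node \<xi> k)} \<union> T"
  proof safe
    fix k assume k: "k < n" "\<xi> k \<in> cyl u" "k \<notin> T"
    obtain m where m: "dst_node \<xi> k = pref (\<xi> k) m"
      using exit_node_eq_pref by (auto simp: dst_node_def)
    have "\<not> m < length u"
    proof
      assume "m < length u"
      then have "dst_node \<xi> k = take m u"
        using k(2) m take_pref[of m "length u" "\<xi> k"] by (simp add: mem_cyl_iff_pref)
      then show False
        using k \<open>m < length u\<close> by (auto simp: T_def)
    qed
    then show "prefix u (dst_node \<xi> k)"
      using k(2) m by (simp add: prefix_pref_iff)
  qed
  then have "card {k. k < n \<and> \<xi> k \<in> cyl u} \<le> card ({k. k < n \<and> prefix u (dst_node \<xi> k)} \<union> T)"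
    by (rule card_mono[rotated]) (simp add: T_def)
  also have "\<dots> \<le> card {k. k < n \<and> prefix u (dst_node \<xi> k)} + card T"
    by (rule card_Un_le)
  also have "card T \<le> card ((\<lambda>m. take m u) ` {..<length u})"
    by (rule card_inj_on_le[of "dst_node \<xi>"])
      (auto simp: T_def intro: inj_on_subset[OF inj_dst_node])
  also have "\<dots> \<le> length u"
    using card_image_le[of "{..<length u}"] by simp
  finally show ?thesis
    by simp
qed

lemma abs_card_subtree_dst_minus_card_cyl:
  "\<bar>real (card {v. u @ v \<in> dst \<xi> n}) - card {k. k < n \<and> \<xi> k \<in> cyl u}\<bar> \<le> length u + 1"
  using card_subtree_dst[of u \<xi> n] card_prefix_dst_node_le_card_cyl[of n u \<xi>]
    card_cyl_le_card_prefix_dst_node[of n \<xi> u]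
  by (cases "u = []") (auto simp: abs_le_iff)

lemma LIMSEQ_div_Suc_if_bounded_dist:
  fixes S C :: "nat \<Rightarrow> real"
  assumes S: "(\<lambda>n. S n / n) \<longlonglongrightarrow> p" and bounded: "\<And>n. \<bar>C n - S n\<bar> \<le> K"
  shows "(\<lambda>n. C n / Suc n) \<longlonglongrightarrow> p"
proof -
  have "(\<lambda>n. K * (1 / real (Suc n))) \<longlonglongrightarrow> 0"
    using tendsto_mult[OF tendsto_const[of K] LIMSEQ_Suc[OF lim_const_over_n[of 1]]] by simp
  then have "(\<lambda>n. (C n - S n) / Suc n) \<longlonglongrightarrow> 0"
    by (rule Lim_null_comparison[rotated])
      (use bounded in \<open>auto simp: abs_divide divide_right_mono\<close>)
  moreover have "(\<lambda>n. (S n / n) * (n / Suc n)) \<longlonglongrightarrow> p * 1"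
    by (intro tendsto_mult S LIMSEQ_n_over_Suc_n)
  moreover have "\<forall>\<^sub>F n in sequentially. (C n - S n) / Suc n + (S n / n) * (n / Suc n) = C n / Suc n"
    using eventually_gt_at_top[of 0] by eventually_elim (simp add: diff_divide_distrib)
  ultimately show ?thesis
    using Lim_transform_eventually[OF tendsto_add] by fastforce
qed

lemma (in prob_space) AE_subtree_size_dst_LIMSEQ:
  fixes \<xi> :: "nat \<Rightarrow> 'a \<Rightarrow> nat \<Rightarrow> bool"
  assumes indep: "indep_vars (\<lambda>_. Vinf) \<xi> UNIV" and distr_\<xi>: "\<And>i. distr M Vinf (\<xi> i) = \<mu>"
  shows "AE \<omega> in M. (\<lambda>n. subtree_size (dst (\<lambda>i. \<xi> i \<omega>) n) u) \<longlonglongrightarrow> measure \<mu> (cyl u)"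
proof -
  have [measurable]: "\<xi> i \<in> M \<rightarrow>\<^sub>M Vinf" for i
    using indep unfolding indep_vars_def by blast
  have [measurable]: "indicator (cyl u) \<in> borel_measurable Vinf"
    by measurable
  define Z where "Z = (\<lambda>i \<omega>. indicator (cyl u) (\<xi> i \<omega>) :: real)"
  have distr_Z: "distr M borel (Z i) = distr \<mu> borel (indicator (cyl u))" for i
  proof -
    have "distr M borel (Z i) = distr (distr M Vinf (\<xi> i)) borel (indicator (cyl u))"
      by (subst distr_distr) (simp_all add: Z_def comp_def)
    then show ?thesis
      by (simp add: distr_\<xi>)
  qed
  have "expectation (Z 0) = integral\<^sup>L (distr M Vinf (\<xi> 0)) (indicator (cyl u))"
    unfolding Z_def by (rule integral_distr[symmetric]) simp_all
  also have "\<dots> = measure \<mu> (cyl u)"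
    using sets_distr[of M Vinf "\<xi> 0"] by (simp add: distr_\<xi> sets_eq_imp_space_eq[of \<mu> Vinf])
  finally have EZ: "expectation (Z 0) = measure \<mu> (cyl u)" .
  have "AE \<omega> in M. (\<lambda>n. (\<Sum>i<n. Z i \<omega>) / n) \<longlonglongrightarrow> expectation (Z 0)"
  proof (rule AE_LIMSEQ_average_iid_bounded[where a = 0 and b = 1])
    show "indep_vars (\<lambda>_. borel) Z UNIV"
      unfolding Z_def by (rule indep_vars_compose2[OF indep]) measurable
    show "distr M borel (Z i) = distr M borel (Z 0)" for i
      by (simp only: distr_Z)
  qed (simp_all add: Z_def)
  then show ?thesis
  proof (rule eventually_mono)
    fix \<omega> assume "(\<lambda>n. (\<Sum>i<n. Z i \<omega>) / n) \<longlonglongrightarrow> expectation (Z 0)"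
    moreover have "(\<Sum>i<n. Z i \<omega>) = card {k. k < n \<and> \<xi> k \<omega> \<in> cyl u}" for n
      by (simp add: Z_def indicator_def Int_def)
    ultimately have "(\<lambda>n. real (card {v. u @ v \<in> dst (\<lambda>i. \<xi> i \<omega>) n}) / Suc n) \<longlonglongrightarrow> measure \<mu> (cyl u)"
      using abs_card_subtree_dst_minus_card_cyl EZ by (intro LIMSEQ_div_Suc_if_bounded_dist) auto
    then show "(\<lambda>n. subtree_size (dst (\<lambda>i. \<xi> i \<omega>) n) u) \<longlonglongrightarrow> measure \<mu> (cyl u)"
      by (simp add: subtree_size_def card_dst)
  qed
qed

theorem theorem1:
  shows "(\<forall>x :: nat \<Rightarrow> bool list set.
            (\<forall>n. binary_tree (x n) \<and> finite (x n) \<and> x n \<noteq> {}) \<longrightarrow>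
            filterlim (\<lambda>n. card (x n)) at_top sequentially \<longrightarrow>
            (\<forall>u. convergent (\<lambda>n. subtree_size (x n) u)) \<longrightarrow>
            (\<exists>!\<mu>. prob_space \<mu> \<and> sets \<mu> = sets Vinf \<and>
                  (\<forall>u. (\<lambda>n. subtree_size (x n) u) \<longlonglongrightarrow> measure \<mu> (cyl u))))
       \<and>
         (\<forall>(\<mu> :: (nat \<Rightarrow> bool) measure) (M :: 'a measure) (\<xi> :: nat \<Rightarrow> 'a \<Rightarrow> nat \<Rightarrow> bool).
            prob_space \<mu> \<longrightarrow> sets \<mu> = sets Vinf \<longrightarrow>
            prob_space M \<longrightarrow>
            prob_space.indep_vars M (\<lambda>_. Vinf) \<xi> UNIV \<longrightarrow>
            (\<forall>i. distr M Vinf (\<xi> i) = \<mu>) \<longrightarrow>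
            (AE \<omega> in M. \<forall>u. (\<lambda>n. subtree_size (dst (\<lambda>i. \<xi> i \<omega>) n) u)
                                 \<longlonglongrightarrow> measure \<mu> (cyl u)))"
proof (intro conjI allI impI)
  fix x :: "nat \<Rightarrow> bool list set"
  assume "\<forall>n. binary_tree (x n) \<and> finite (x n) \<and> x n \<noteq> {}"
    and "filterlim (\<lambda>n. card (x n)) at_top sequentially"
    and "\<forall>u. convergent (\<lambda>n. subtree_size (x n) u)"
  then show "\<exists>!\<mu>. prob_space \<mu> \<and> sets \<mu> = sets Vinf \<and>
                  (\<forall>u. (\<lambda>n. subtree_size (x n) u) \<longlonglongrightarrow> measure \<mu> (cyl u))"
    by (intro ex1_measure_subtree_size_limit) auto
next
  fix \<mu> :: "(nat \<Rightarrow> bool) measure" and M :: "'a measure" and \<xi> :: "nat \<Rightarrow> 'a \<Rightarrow> nat \<Rightarrow> bool"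
  \<comment> \<open>The hypotheses on \<open>\<mu>\<close> follow from \<open>\<mu>\<close> being the distribution of each \<open>\<xi> i\<close>.\<close>
  assume "prob_space M" "prob_space.indep_vars M (\<lambda>_. Vinf) \<xi> UNIV" "\<forall>i. distr M Vinf (\<xi> i) = \<mu>"
  then show "AE \<omega> in M. \<forall>u. (\<lambda>n. subtree_size (dst (\<lambda>i. \<xi> i \<omega>) n) u) \<longlonglongrightarrow> measure \<mu> (cyl u)"
    unfolding AE_all_countable using prob_space.AE_subtree_size_dst_LIMSEQ by blast
qed

end
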